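(* Let $H$ be a $3$-uniform hypergraph and let $C_1,\ldots,C_k$ be cycles in its $1$-skeleton $\mathcal S(H)$. Set $m=\bigl|\bigcup_{i=1}^k V(C_i)\bigr|$, and suppose $p\le \frac1{k+m}$ and $\epsilon<\frac1{k(k+m)}$ are parameters such that each cycle $C_i$ is $(p,\epsilon)$-disk-coverable in $H$. Then there are disks $D_1,\ldots,D_k\subseteq H$ with $\partial D_i=C_i$ for each $i$, such that for any $i\ne j$ the simplicial complexes associated to $D_i$ and $D_j$ intersect exactly in the one-dimensional simplicial complex $C_i\cap C_j$.
   Context: A $3$-uniform hypergraph is identified with the $2$-dimensional simplicial complex whose facets are its edges. The $1$-skeleton $\mathcal S(H)$ of $H$ is the graph on $V(H)$ whose edges are the pairs $xy$ with $xyz\in E(H)$ for some $z$. A disk is a $3$-uniform hypergraph $D$ whose associated simplicial complex is homeomorphic to the closed $2$-dimensional disk; its boundary $\partial D$ is the cycle in $\mathcal S(D)$ forming the topological boundary, and its interior vertex set is $V^\circ(D)=V(D)\setminus V(\partial D)$. A disk $D$ with at least two edges is boundary-inducing if $\partial D$ is an induced subgraph of $\mathcal S(D)$. For $p,\epsilon\in(0,1)$ and a cycle $C\subseteq\mathcal S(H)$: choose $U\subseteq V(H)$ by including each vertex independently with probability $p$, and let $A_C$ be the event that there is a boundary-inducing disk $D\subseteq H$ with $\partial D=C$ and $V^\circ(D)\subseteq U$. The cycle $C$ is $(p,\epsilon)$-disk-coverable if $\Pr[A_C]\ge 1-\epsilon$. *)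

theory Defs
  imports "HOL-Analysis.Analysis"
begin

definition three_uniform :: "'a set set \<Rightarrow> bool" where
  "three_uniform H \<longleftrightarrow> finite H \<and> (\<forall>e\<in>H. card e = 3)"

definition hverts :: "'a set set \<Rightarrow> 'a set" where
  "hverts H = \<Union>H"

definition skel :: "'a set set \<Rightarrow> 'a set set" where
  "skel H = {{x, y} | x y. x \<noteq> y \<and> (\<exists>e\<in>H. x \<in> e \<and> y \<in> e)}"

definition is_cycle :: "'a set set \<Rightarrow> bool" where
  "is_cycle C \<longleftrightarrow> (\<exists>xs. distinct xs \<and> length xs \<ge> 3 \<and>
      C = {{xs ! i, xs ! ((i + 1) mod length xs)} | i. i < length xs})"

text \<open>Geometric realisation of the simplicial complex whose facets are the edges of D:
  points are barycentric-coordinate functions supported on a facet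
  (subspace of the product topology on 'a \<Rightarrow> real).\<close>
definition realization :: "'a set set \<Rightarrow> ('a \<Rightarrow> real) set" where
  "realization D = {f. (\<forall>v. 0 \<le> f v) \<and> (\<exists>e\<in>D. {v. f v \<noteq> 0} \<subseteq> e \<and> sum f e = 1)}"

definition is_disk :: "'a set set \<Rightarrow> bool" where
  "is_disk D \<longleftrightarrow> three_uniform D \<and> realization D homeomorphic cball (0::complex) 1"

definition bd :: "'a set set \<Rightarrow> 'a set set" where
  "bd D = {s. card s = 2 \<and> card {e\<in>D. s \<subseteq> e} = 1}"

definition interior_verts :: "'a set set \<Rightarrow> 'a set" where
  "interior_verts D = hverts D - \<Union>(bd D)"

definition boundary_inducing :: "'a set set \<Rightarrow> bool" where
  "boundary_inducing D \<longleftrightarrow> card D \<ge> 2 \<and>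
     (\<forall>s\<in>skel D. s \<subseteq> \<Union>(bd D) \<longrightarrow> s \<in> bd D)"

definition rand_subset_prob :: "real \<Rightarrow> 'a set \<Rightarrow> ('a set \<Rightarrow> bool) \<Rightarrow> real" where
  "rand_subset_prob p V P =
     (\<Sum>U\<in>Pow V. if P U then p ^ card U * (1 - p) ^ card (V - U) else 0)"

definition disk_event :: "'a set set \<Rightarrow> 'a set set \<Rightarrow> 'a set \<Rightarrow> bool" where
  "disk_event H C U \<longleftrightarrow> (\<exists>D\<subseteq>H. is_disk D \<and> boundary_inducing D \<and> bd D = C
       \<and> interior_verts D \<subseteq> U)"

definition disk_coverable :: "'a set set \<Rightarrow> real \<Rightarrow> real \<Rightarrow> 'a set set \<Rightarrow> bool" where
  "disk_coverable H p \<epsilon> C \<longleftrightarrow> rand_subset_prob p (hverts H) (disk_event H C) \<ge> 1 - \<epsilon>"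

definition simplices :: "'a set set \<Rightarrow> 'a set set" where
  "simplices D = {s. s \<noteq> {} \<and> (\<exists>e\<in>D. s \<subseteq> e)}"

definition graph_inter_complex :: "'a set set \<Rightarrow> 'a set set \<Rightarrow> 'a set set" where
  "graph_inter_complex C C' = {{v} | v. v \<in> \<Union>C \<inter> \<Union>C'} \<union> (C \<inter> C')"

end

theory Submission
  imports Defs
begin

text \<open>Let \<open>W\<close> be the set of the \<open>m\<close> vertices of the cycles. Colour every other vertex
  independently, with colour \<open>i < k\<close> with probability \<open>p\<close> each and leaving it uncoloured
  otherwise. Colour class \<open>i\<close> is a \<open>p\<close>-random subset of \<open>V(H) - W\<close>; compared with a
  \<open>p\<close>-random subset of \<open>V(H)\<close> it is forced to avoid the vertices of \<open>W\<close> off \<open>C\<^sub>i\<close>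
  (the vertices of \<open>C\<^sub>i\<close> itself are never interior), which costs a factor
  \<open>(1 - p)\<^sup>m \<ge> 1 - m p \<ge> k / (k + m)\<close>. So class \<open>i\<close> fails to contain the interior of a
  boundary-inducing disk bounded by \<open>C\<^sub>i\<close> with probability at most \<open>\<epsilon> (k + m) / k < 1 / k\<close>,
  and by the union bound some colouring works for all \<open>i\<close> at once.

  Disks whose interiors lie in disjoint colour classes share only vertices of both boundaries.
  A shared edge is then a boundary edge of both, as the disks are boundary-inducing; a shared
  triangle is impossible, since a triangle of a disk with all three sides on the boundary
  would disconnect the disk once its three vertices are removed.\<close>

section \<open>Random subsets\<close>

lemma rand_subset_prob_cong:
  assumes "\<And>U. U \<subseteq> X \<Longrightarrow> P U \<longleftrightarrow> Q U"
  shows "rand_subset_prob p X P = rand_subset_prob p X Q"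
  unfolding rand_subset_prob_def using assms by (intro sum.cong) auto

lemma rand_subset_prob_empty: "rand_subset_prob p {} P = (if P {} then 1 else 0)"
  unfolding rand_subset_prob_def by simp

lemma rand_subset_prob_insert:
  assumes "finite X" "x \<notin> X"
  shows "rand_subset_prob p (insert x X) P =
    p * rand_subset_prob p X (\<lambda>U. P (insert x U)) + (1 - p) * rand_subset_prob p X P"
proof -
  let ?w = "\<lambda>Y U. if P U then p ^ card U * (1 - p) ^ card (Y - U) else 0"
  have inj: "inj_on (insert x) (Pow X)"
    using assms(2) by (intro inj_onI) (metis Diff_insert_absorb PowD subsetD)
  have "rand_subset_prob p (insert x X) P =
      (\<Sum>U\<in>Pow X. ?w (insert x X) U) + (\<Sum>U\<in>insert x ` Pow X. ?w (insert x X) U)"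
    unfolding rand_subset_prob_def Pow_insert using assms by (intro sum.union_disjoint) auto
  also have "(\<Sum>U\<in>insert x ` Pow X. ?w (insert x X) U) = (\<Sum>U\<in>Pow X. ?w (insert x X) (insert x U))"
    using inj by (simp add: sum.reindex)
  also have "\<dots> = (\<Sum>U\<in>Pow X. p * (if P (insert x U) then p ^ card U * (1 - p) ^ card (X - U) else 0))"
  proof (intro sum.cong refl)
    fix U assume "U \<in> Pow X"
    then have "finite U" "x \<notin> U" "insert x X - insert x U = X - U"
      using assms finite_subset by auto
    then show "?w (insert x X) (insert x U) =
        p * (if P (insert x U) then p ^ card U * (1 - p) ^ card (X - U) else 0)" by simp
  qed
  also have "(\<Sum>U\<in>Pow X. ?w (insert x X) U) = (\<Sum>U\<in>Pow X. (1 - p) * ?w X U)"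
  proof (intro sum.cong refl)
    fix U assume "U \<in> Pow X"
    then have "card (insert x X - U) = Suc (card (X - U))"
      using assms by (auto simp: insert_Diff_if)
    then show "?w (insert x X) U = (1 - p) * ?w X U" by simp
  qed
  finally show ?thesis
    unfolding rand_subset_prob_def by (simp add: sum_distrib_left add.commute)
qed

lemma rand_subset_prob_nonneg: "0 \<le> p \<Longrightarrow> p \<le> 1 \<Longrightarrow> 0 \<le> rand_subset_prob p X P"
  unfolding rand_subset_prob_def by (intro sum_nonneg) auto

lemma rand_subset_prob_mono:
  assumes "0 \<le> p" "p \<le> 1" "\<And>U. U \<subseteq> X \<Longrightarrow> P U \<Longrightarrow> Q U"
  shows "rand_subset_prob p X P \<le> rand_subset_prob p X Q"
  unfolding rand_subset_prob_def using assms by (intro sum_mono) auto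

lemma rand_subset_prob_True: "finite X \<Longrightarrow> rand_subset_prob p X (\<lambda>_. True) = 1"
  by (induction X rule: finite_induct) (simp_all add: rand_subset_prob_empty rand_subset_prob_insert)

lemma rand_subset_prob_not:
  assumes "finite X"
  shows "rand_subset_prob p X (\<lambda>U. \<not> P U) = 1 - rand_subset_prob p X P"
proof -
  have "rand_subset_prob p X P + rand_subset_prob p X (\<lambda>U. \<not> P U) = rand_subset_prob p X (\<lambda>_. True)"
    unfolding rand_subset_prob_def sum.distrib[symmetric] by (intro sum.cong) auto
  then show ?thesis using rand_subset_prob_True[OF assms] by simp
qed

lemma rand_subset_prob_avoid:
  assumes "finite X" "finite Y" "X \<inter> Y = {}"
  shows "rand_subset_prob p (X \<union> Y) (\<lambda>U. P U \<and> U \<inter> Y = {}) = (1 - p) ^ card Y * rand_subset_prob p X P"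
  using assms(2,3)
proof (induction Y rule: finite_induct)
  case empty
  then show ?case by simp
next
  case (insert y Y)
  then have y: "y \<notin> X \<union> Y" by auto
  have "rand_subset_prob p (X \<union> insert y Y) (\<lambda>U. P U \<and> U \<inter> insert y Y = {}) =
      (1 - p) * rand_subset_prob p (X \<union> Y) (\<lambda>U. P U \<and> U \<inter> insert y Y = {})"
    using rand_subset_prob_insert[OF _ y, of p] assms(1) insert.hyps(1)
    by (simp add: rand_subset_prob_def)
  also have "rand_subset_prob p (X \<union> Y) (\<lambda>U. P U \<and> U \<inter> insert y Y = {}) =
      rand_subset_prob p (X \<union> Y) (\<lambda>U. P U \<and> U \<inter> Y = {})"
    using y by (intro rand_subset_prob_cong) auto
  finally show ?case using insert by simp
qed

lemma rand_subset_prob_irrelevant: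
  assumes "finite X" "finite Z" "X \<inter> Z = {}" "\<And>U. U \<subseteq> X \<union> Z \<Longrightarrow> P U \<longleftrightarrow> P (U \<inter> X)"
  shows "rand_subset_prob p (X \<union> Z) P = rand_subset_prob p X P"
  using assms(2-4)
proof (induction Z rule: finite_induct)
  case empty
  then show ?case by simp
next
  case (insert z Z)
  then have z: "z \<notin> X \<union> Z" by auto
  have "rand_subset_prob p (X \<union> Z) (\<lambda>U. P (insert z U)) = rand_subset_prob p (X \<union> Z) P"
  proof (intro rand_subset_prob_cong)
    fix U assume "U \<subseteq> X \<union> Z"
    then show "P (insert z U) \<longleftrightarrow> P U"
      using insert.prems(2)[of U] insert.prems(2)[of "insert z U"] z by auto
  qed
  then have "rand_subset_prob p (X \<union> insert z Z) P = rand_subset_prob p (X \<union> Z) P"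
    using rand_subset_prob_insert[OF _ z, of p P] assms(1) insert.hyps(1) by (simp add: algebra_simps)
  also have "\<dots> = rand_subset_prob p X P"
    using insert by (intro insert.IH) auto
  finally show ?case .
qed

lemma rand_subset_prob_Diff_le:
  assumes "finite V" "Y \<subseteq> V" "Z \<subseteq> V" "Y \<inter> Z = {}" "0 \<le> p" "p \<le> 1"
    and "\<And>U. U \<subseteq> V \<Longrightarrow> P U \<longleftrightarrow> P (U - Z)"
  shows "(1 - p) ^ card Y * rand_subset_prob p (V - (Y \<union> Z)) P \<le> rand_subset_prob p V P"
proof -
  let ?X = "V - (Y \<union> Z)"
  have V: "V = (?X \<union> Z) \<union> Y" using assms(2,3) by blast
  have fin: "finite ?X" "finite Y" "finite Z"
    using assms(1-3) finite_subset by auto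
  have "rand_subset_prob p (?X \<union> Z) P = rand_subset_prob p ?X P"
  proof (rule rand_subset_prob_irrelevant)
    fix U assume "U \<subseteq> ?X \<union> Z"
    then have "U \<subseteq> V" "U \<inter> ?X = U - Z" using assms(3) by auto
    then show "P U \<longleftrightarrow> P (U \<inter> ?X)" using assms(7) by simp
  qed (use fin in auto)
  then have "(1 - p) ^ card Y * rand_subset_prob p ?X P = (1 - p) ^ card Y * rand_subset_prob p (?X \<union> Z) P"
    by simp
  also have "\<dots> = rand_subset_prob p V (\<lambda>U. P U \<and> U \<inter> Y = {})"
    using fin assms(4) by (subst V, subst rand_subset_prob_avoid) auto
  also have "\<dots> \<le> rand_subset_prob p V P"
    using assms(5,6) by (intro rand_subset_prob_mono) auto
  finally show ?thesis .
qed

section \<open>Random colourings\<close>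

definition colouring_prob :: "(nat \<Rightarrow> real) \<Rightarrow> nat \<Rightarrow> 'a set \<Rightarrow> (('a \<Rightarrow> nat) \<Rightarrow> bool) \<Rightarrow> real" where
  "colouring_prob q K X F = (\<Sum>g \<in> X \<rightarrow>\<^sub>E {..K}. if F g then \<Prod>x\<in>X. q (g x) else 0)"

lemma colouring_prob_empty: "colouring_prob q K {} F = (if F (\<lambda>_. undefined) then 1 else 0)"
  unfolding colouring_prob_def by simp

lemma colouring_prob_insert:
  assumes "finite X" "x \<notin> X"
  shows "colouring_prob q K (insert x X) F = (\<Sum>c\<le>K. q c * colouring_prob q K X (\<lambda>g. F (g(x := c))))"
proof -
  let ?w = "\<lambda>c g. if F (g(x := c)) then \<Prod>v\<in>X. q (g v) else 0"
  have "colouring_prob q K (insert x X) F =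
      (\<Sum>(c, g) \<in> {..K} \<times> (X \<rightarrow>\<^sub>E {..K}).
        if F (g(x := c)) then \<Prod>v\<in>insert x X. q ((g(x := c)) v) else 0)"
    unfolding colouring_prob_def using assms
    by (intro sum.reindex_bij_witness[of _ "\<lambda>(c, g). g(x := c)" "\<lambda>g. (g x, g(x := undefined))"])
       (auto simp: PiE_def extensional_def)
  also have "\<dots> = (\<Sum>(c, g) \<in> {..K} \<times> (X \<rightarrow>\<^sub>E {..K}). q c * ?w c g)"
  proof (intro sum.cong refl, clarify)
    fix c g
    have "(\<Prod>v\<in>X. q ((g(x := c)) v)) = (\<Prod>v\<in>X. q (g v))"
      using assms by (intro prod.cong) auto
    then show "(if F (g(x := c)) then \<Prod>v\<in>insert x X. q ((g(x := c)) v) else 0) = q c * ?w c g"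
      using assms by simp
  qed
  also have "\<dots> = (\<Sum>c\<le>K. q c * colouring_prob q K X (\<lambda>g. F (g(x := c))))"
    unfolding colouring_prob_def sum.cartesian_product[symmetric] by (simp add: sum_distrib_left)
  finally show ?thesis .
qed

lemma colouring_prob_colour_class:
  assumes "finite X" "i \<le> K" "q i = p" "(\<Sum>c \<in> {..K} - {i}. q c) = 1 - p"
  shows "colouring_prob q K X (\<lambda>g. P {v\<in>X. g v = i}) = rand_subset_prob p X P"
  using assms(1)
proof (induction X arbitrary: P rule: finite_induct)
  case empty
  then show ?case by (simp add: colouring_prob_empty rand_subset_prob_empty)
next
  case (insert x X)
  have restrict_class: "colouring_prob q K X (\<lambda>g. P {v \<in> insert x X. (g(x := c)) v = i}) =
      (if c = i then rand_subset_prob p X (\<lambda>U. P (insert x U)) else rand_subset_prob p X P)" for c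
  proof -
    have "{v \<in> insert x X. (g(x := c)) v = i} = (if c = i then insert x {v\<in>X. g v = i} else {v\<in>X. g v = i})"
      for g using insert.hyps(2) by auto
    then show ?thesis
      using insert.IH[of P] insert.IH[of "\<lambda>U. P (insert x U)"] by simp
  qed
  have "colouring_prob q K (insert x X) (\<lambda>g. P {v \<in> insert x X. g v = i}) =
      (\<Sum>c\<le>K. q c * (if c = i then rand_subset_prob p X (\<lambda>U. P (insert x U)) else rand_subset_prob p X P))"
    by (simp only: colouring_prob_insert[OF insert.hyps] restrict_class)
  also have "\<dots> = q i * rand_subset_prob p X (\<lambda>U. P (insert x U)) +
      (\<Sum>c \<in> {..K} - {i}. q c * rand_subset_prob p X P)"
    using assms(2) by (simp add: sum.remove[of _ i] cong: sum.cong_simp)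
  also have "\<dots> = rand_subset_prob p (insert x X) P"
    using assms(3,4) by (simp add: rand_subset_prob_insert[OF insert.hyps] sum_distrib_right[symmetric])
  finally show ?case .
qed

lemma colouring_prob_True:
  assumes "finite X" "(\<Sum>c\<le>K. q c) = 1"
  shows "colouring_prob q K X (\<lambda>_. True) = 1"
  using assms(1)
  by (induction X rule: finite_induct)
     (simp_all add: colouring_prob_empty colouring_prob_insert assms(2) sum_distrib_right[symmetric])

lemma colouring_prob_not:
  assumes "finite X" "(\<Sum>c\<le>K. q c) = 1"
  shows "colouring_prob q K X (\<lambda>g. \<not> F g) = 1 - colouring_prob q K X F"
proof -
  have "colouring_prob q K X F + colouring_prob q K X (\<lambda>g. \<not> F g) = colouring_prob q K X (\<lambda>_. True)"
    unfolding colouring_prob_def sum.distrib[symmetric] by (intro sum.cong) auto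
  then show ?thesis using colouring_prob_True[OF assms] by simp
qed

lemma colouring_prob_ex_le_sum:
  fixes k :: nat
  assumes "\<And>c. 0 \<le> q c"
  shows "colouring_prob q K X (\<lambda>g. \<exists>i<k. F i g) \<le> (\<Sum>i<k. colouring_prob q K X (F i))"
proof -
  let ?w = "\<lambda>g. \<Prod>x\<in>X. q (g x)"
  have "colouring_prob q K X (\<lambda>g. \<exists>i<k. F i g) \<le> (\<Sum>g \<in> X \<rightarrow>\<^sub>E {..K}. \<Sum>i<k. if F i g then ?w g else 0)"
    unfolding colouring_prob_def
  proof (intro sum_mono)
    fix g
    have w: "0 \<le> ?w g" using assms by (simp add: prod_nonneg)
    show "(if \<exists>i<k. F i g then ?w g else 0) \<le> (\<Sum>i<k. if F i g then ?w g else 0)"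
    proof (cases "\<exists>i<k. F i g")
      case True
      then obtain i where "i < k" "F i g" by blast
      then have "(if F i g then ?w g else 0) \<le> (\<Sum>i<k. if F i g then ?w g else 0)"
        using w by (intro member_le_sum) auto
      then show ?thesis using \<open>F i g\<close> by simp
    qed (use w in \<open>auto intro: sum_nonneg\<close>)
  qed
  also have "\<dots> = (\<Sum>i<k. colouring_prob q K X (F i))"
    unfolding colouring_prob_def by (rule sum.swap)
  finally show ?thesis .
qed

lemma colouring_prob_pos_imp_ex: "0 < colouring_prob q K X F \<Longrightarrow> \<exists>g. F g"
  unfolding colouring_prob_def by (metis (mono_tags) less_irrefl sum.neutral)

lemma exists_disjoint_sets_satisfying:
  assumes "finite X" "0 \<le> p" "real k * p \<le> 1"
    and "\<And>i. i < k \<Longrightarrow> rand_subset_prob p X (\<lambda>U. \<not> A i U) < 1 / real k"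
  shows "\<exists>U. (\<forall>i<k. U i \<subseteq> X \<and> A i (U i)) \<and> (\<forall>i<k. \<forall>j<k. i \<noteq> j \<longrightarrow> U i \<inter> U j = {})"
proof (cases "k = 0")
  case True
  then show ?thesis by simp
next
  case False
  define q where "q c = (if c < k then p else 1 - real k * p)" for c
    \<comment> \<open>colour \<open>k\<close> means uncoloured\<close>
  have q_nonneg: "0 \<le> q c" for c
    using assms(2,3) by (simp add: q_def)
  have q_sum: "(\<Sum>c\<le>k. q c) = 1"
    by (simp add: q_def lessThan_Suc_atMost[symmetric])
  have q_sum_others: "(\<Sum>c \<in> {..k} - {i}. q c) = 1 - p" if "i < k" for i
    using q_sum that sum.remove[of "{..k}" i q] by (simp add: q_def)
  define F where "F i g \<longleftrightarrow> A i {v\<in>X. g v = i}" for i g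
  have "colouring_prob q k X (\<lambda>g. \<not> (\<forall>i<k. F i g)) \<le> (\<Sum>i<k. colouring_prob q k X (\<lambda>g. \<not> F i g))"
    using colouring_prob_ex_le_sum[OF q_nonneg] by simp
  also have "\<dots> = (\<Sum>i<k. rand_subset_prob p X (\<lambda>U. \<not> A i U))"
    unfolding F_def
    by (intro sum.cong refl colouring_prob_colour_class assms(1) q_sum_others) (auto simp: q_def)
  also have "\<dots> < (\<Sum>i<k. 1 / real k)"
    using False assms(4) by (intro sum_strict_mono) auto
  also have "\<dots> = 1"
    using False by simp
  finally have "0 < colouring_prob q k X (\<lambda>g. \<forall>i<k. F i g)"
    using colouring_prob_not[OF assms(1) q_sum, of "\<lambda>g. \<forall>i<k. F i g"] by linarith
  then obtain g where "\<forall>i<k. F i g"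
    using colouring_prob_pos_imp_ex by blast
  then show ?thesis
    by (intro exI[of _ "\<lambda>i. {v\<in>X. g v = i}"]) (auto simp: F_def)
qed

section \<open>Geometric realizations of disks\<close>

lemma realization_singleton:
  "realization {e} = {f. (\<forall>v. 0 \<le> f v) \<and> (\<forall>v. v \<notin> e \<longrightarrow> f v = 0) \<and> sum f e = 1}"
  unfolding realization_def by auto

lemma realization_Union: "realization D = (\<Union>e\<in>D. realization {e})"
  unfolding realization_def by blast

lemma realization_mono: "D \<subseteq> D' \<Longrightarrow> realization D \<subseteq> realization D'"
  unfolding realization_def by blast

lemma realization_insert: "realization (insert e D) = realization {e} \<union> realization D"
  unfolding realization_def by blast

lemma closed_realization_singleton: "closed (realization {e})"
proof -
  have "realization {e} = (\<Inter>v. {f. 0 \<le> f v}) \<inter> (\<Inter>v \<in> - e. {f. f v = 0}) \<inter> {f. sum f e = 1}"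
    unfolding realization_singleton by blast
  moreover have "closed {f :: 'a \<Rightarrow> real. sum f e = 1}"
    by (intro closed_Collect_eq continuous_on_sum continuous_on_product_coordinates continuous_on_const)
  ultimately show ?thesis
    by (auto intro!: closed_Int closed_INT closed_Collect_le closed_Collect_eq continuous_on_const)
qed

lemma closed_realization: "finite D \<Longrightarrow> closed (realization D)"
  unfolding realization_Union[of D] by (intro closed_UN) (simp_all add: closed_realization_singleton)

lemma connected_disk_Diff_finite:
  assumes "S homeomorphic cball (0::complex) 1" "finite F"
  shows "connected (S - F)"
proof -
  obtain h g where hom: "homeomorphism S (cball (0::complex) 1) h g"
    using assms(1) unfolding homeomorphic_def by blast
  have "inj_on h S"
    by (rule inj_on_inverseI[where g = g]) (rule homeomorphism_apply1[OF hom])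
  then have "h ` (S - (S \<inter> F)) = cball 0 1 - h ` (S \<inter> F)"
    using homeomorphism_image1[OF hom] by (subst inj_on_image_set_diff) auto
  moreover have "S - (S \<inter> F) = S - F"
    by blast
  ultimately have "homeomorphism (S - F) (cball 0 1 - h ` (S \<inter> F)) h g"
    by (intro homeomorphism_of_subsets[OF hom, of _ "{}"]) auto
  then have "(S - F) homeomorphic (cball (0::complex) 1 - h ` (S \<inter> F))"
    unfolding homeomorphic_def by blast
  moreover have "connected (cball (0::complex) 1 - h ` (S \<inter> F))"
    using assms(2)
    by (intro connected_convex_diff_countable convex_cball countable_finite finite_imageI)
       (simp_all add: collinear_aff_dim aff_dim_cball)
  ultimately show ?thesis
    using homeomorphic_connectedness by blast
qed

definition barycentre :: "'a set \<Rightarrow> 'a \<Rightarrow> real" where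
  "barycentre e v = indicator e v / card e"

lemma barycentre_in_realization_Diff_vertices:
  assumes "e \<in> D" "finite e" "2 \<le> card e"
  shows "barycentre e \<in> realization {e} \<inter> (realization D - range (\<lambda>v. indicator {v}))"
proof -
  have "barycentre e \<in> realization {e}"
    using assms(2,3) unfolding realization_singleton barycentre_def by (auto simp: indicator_def)
  moreover have "realization {e} \<subseteq> realization D"
    using assms(1) by (intro realization_mono) simp
  moreover have "barycentre e \<noteq> indicator {v}" for v
  proof
    assume "barycentre e = indicator {v}"
    then have "barycentre e v = 1"
      by simp
    then show False
      using assms(3) by (cases "v \<in> e") (simp_all add: barycentre_def)
  qed
  ultimately show ?thesis
    by blast
qed

lemma realization_Int_subset_vertices:
  assumes "f \<in> realization {T}" "f \<in> realization D" "\<And>e. e \<in> D \<Longrightarrow> card (e \<inter> T) \<le> 1" "finite T"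
  shows "f \<in> (\<lambda>v. indicator {v}) ` T"
proof -
  obtain e where "e \<in> D" "f \<in> realization {e}"
    using assms(2) realization_Union[of D] by blast
  then have supp: "{v. f v \<noteq> 0} \<subseteq> e \<inter> T" and sum1: "sum f T = 1" and meet: "card (e \<inter> T) \<le> 1"
    using assms(1,3) unfolding realization_singleton by auto
  then obtain v where v: "v \<in> T" "f v \<noteq> 0"
    by (metis (mono_tags) sum.neutral zero_neq_one)
  have off_v: "f u = 0" if "u \<noteq> v" for u
    using card_le_Suc0_iff_eq[of "e \<inter> T"] supp that v meet assms(4) by auto
  have "sum f T = sum f {v}"
    using v off_v assms(4) by (intro sum.mono_neutral_right) auto
  then have "f = indicator {v}"
    using sum1 off_v by (auto simp: fun_eq_iff indicator_def)
  then show ?thesis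
    using v(1) by (rule image_eqI)
qed

lemma bd_unique_triangle:
  assumes "s \<in> bd D" "finite D" "e \<in> D" "e' \<in> D" "s \<subseteq> e" "s \<subseteq> e'"
  shows "e = e'"
proof -
  have "card {e\<in>D. s \<subseteq> e} = 1"
    using assms(1) unfolding bd_def by simp
  then obtain x where x: "{e\<in>D. s \<subseteq> e} = {x}"
    by (rule card_1_singletonE)
  have "e \<in> {e\<in>D. s \<subseteq> e}" "e' \<in> {e\<in>D. s \<subseteq> e}"
    using assms(3-6) by simp_all
  then show ?thesis
    unfolding x by simp
qed

lemma card_Int_le_1_if_sides_in_bd:
  assumes "finite D" "T \<in> D" "e \<in> D" "e \<noteq> T" "\<And>s. s \<subseteq> T \<Longrightarrow> card s = 2 \<Longrightarrow> s \<in> bd D"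
  shows "card (e \<inter> T) \<le> 1"
proof (rule ccontr)
  assume "\<not> card (e \<inter> T) \<le> 1"
  then have "2 \<le> card (e \<inter> T)"
    by simp
  then obtain s where s: "s \<subseteq> e \<inter> T" "card s = 2"
    by (rule obtain_subset_with_card_n)
  then have "s \<in> bd D"
    using assms(5) by simp
  then have "e = T"
    using bd_unique_triangle[OF _ assms(1,3,2)] s(1) by blast
  then show False
    using assms(4) by blast
qed

lemma disk_triangle_has_inner_side:
  assumes "is_disk D" "2 \<le> card D" "T \<in> D"
  shows "\<exists>s \<subseteq> T. card s = 2 \<and> s \<notin> bd D"
proof (rule ccontr)
  assume "\<not> ?thesis"
  then have sides: "s \<in> bd D" if "s \<subseteq> T" "card s = 2" for s
    using that by blast
  have fin: "finite D" and card3: "\<And>e. e \<in> D \<Longrightarrow> card e = 3"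
    and hom: "realization D homeomorphic cball (0::complex) 1"
    using assms(1) unfolding is_disk_def three_uniform_def by auto
  have fin_card: "finite e" "2 \<le> card e" if "e \<in> D" for e
    using card3[OF that] card_ge_0_finite[of e] by auto
  define D' where "D' = D - {T}"
  have "D' \<noteq> {}"
  proof
    assume "D' = {}"
    then have "D = {T}"
      using assms(3) unfolding D'_def by blast
    then show False
      using assms(2) by simp
  qed
  then obtain e0 where e0: "e0 \<in> D'"
    by blast
  have meet: "card (e \<inter> T) \<le> 1" if "e \<in> D'" for e
    using that card_Int_le_1_if_sides_in_bd[OF fin assms(3) _ _ sides] unfolding D'_def by blast
  \<comment> \<open>So \<open>T\<close> meets the other triangles only in vertices, and deleting its three vertices
    disconnects the disk.\<close>
  define R where "R = realization D - (\<lambda>v. indicator {v}) ` T"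
  have "R \<subseteq> realization {T} \<union> realization D'"
    using assms(3) realization_insert[of T D'] unfolding R_def D'_def by (simp add: insert_absorb)
  moreover have "f \<in> (\<lambda>v. indicator {v}) ` T" if "f \<in> realization {T}" "f \<in> realization D'" for f
    using that meet fin_card(1)[OF assms(3)] by (rule realization_Int_subset_vertices)
  then have "realization {T} \<inter> realization D' \<inter> R = {}"
    unfolding R_def by blast
  moreover have "realization {e0} \<subseteq> realization D'"
    using e0 by (intro realization_mono) simp
  then have "realization {T} \<inter> R \<noteq> {}" "realization D' \<inter> R \<noteq> {}"
    using barycentre_in_realization_Diff_vertices[OF assms(3) fin_card[OF assms(3)]]
      barycentre_in_realization_Diff_vertices[of e0 D] fin_card[of e0] e0
    unfolding R_def D'_def by auto
  moreover have "connected R"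
    unfolding R_def using hom fin_card[OF assms(3)] by (intro connected_disk_Diff_finite) auto
  moreover have "closed (realization {T})" "closed (realization D')"
    using fin unfolding D'_def by (simp_all add: closed_realization_singleton closed_realization)
  ultimately show False
    using connected_closedD[of R "realization {T}" "realization D'"] by auto
qed

section \<open>Boundary-inducing disks\<close>

lemma bd_subset_triangle:
  assumes "s \<in> bd D"
  obtains e where "e \<in> D" "s \<subseteq> e"
proof -
  have "card {e\<in>D. s \<subseteq> e} = 1"
    using assms unfolding bd_def by simp
  then have "{e\<in>D. s \<subseteq> e} \<noteq> {}"
    by force
  then show ?thesis
    using that by blast
qed

lemma bd_nonempty: "s \<in> bd D \<Longrightarrow> s \<noteq> {}"
  unfolding bd_def by force

lemma boundary_inducing_side_in_bd:
  assumes "boundary_inducing D" "e \<in> D" "s \<subseteq> e" "card s = 2" "s \<subseteq> \<Union>(bd D)"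
  shows "s \<in> bd D"
proof -
  obtain x y where "s = {x, y}" "x \<noteq> y"
    using assms(4) card_2_iff by metis
  then have "s \<in> skel D"
    unfolding skel_def using assms(2,3) by blast
  then show ?thesis
    using assms(1,5) unfolding boundary_inducing_def by blast
qed

lemma boundary_inducing_simplex_on_bd:
  assumes "is_disk D" "boundary_inducing D" "s \<in> simplices D" "s \<subseteq> \<Union>(bd D)"
  shows "card s = 1 \<or> s \<in> bd D"
proof -
  obtain e where e: "e \<in> D" "s \<subseteq> e" and "s \<noteq> {}"
    using assms(3) unfolding simplices_def by blast
  have "card e = 3"
    using assms(1) e(1) unfolding is_disk_def three_uniform_def by blast
  then have "finite e"
    by (intro card_ge_0_finite) simp
  then have "finite s" "card s \<le> 3"
    using e(2) \<open>card e = 3\<close> card_mono finite_subset by fastforce+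
  moreover have "card s \<noteq> 0"
    using \<open>finite s\<close> \<open>s \<noteq> {}\<close> by simp
  ultimately consider "card s = 1" | "card s = 2" | "card s = 3"
    by linarith
  then show ?thesis
  proof cases
    case 2
    then show ?thesis
      using boundary_inducing_side_in_bd[OF assms(2) e] assms(4) by blast
  next
    case 3
    then have "s = e"
      using card_subset_eq[OF \<open>finite e\<close> e(2)] \<open>card e = 3\<close> by simp
    moreover have "2 \<le> card D"
      using assms(2) unfolding boundary_inducing_def by blast
    ultimately obtain t where "t \<subseteq> s" "card t = 2" "t \<notin> bd D"
      using disk_triangle_has_inner_side[OF assms(1) _ e(1)] by blast
    then show ?thesis
      using boundary_inducing_side_in_bd[OF assms(2) e(1)] assms(4) \<open>s = e\<close> by blast
  qed simp
qed

lemma bd_subset_simplices: "bd D \<subseteq> simplices D"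
proof
  fix s assume "s \<in> bd D"
  moreover obtain e where "e \<in> D" "s \<subseteq> e"
    using bd_subset_triangle[OF \<open>s \<in> bd D\<close>] by blast
  ultimately show "s \<in> simplices D"
    unfolding simplices_def using bd_nonempty by blast
qed

lemma simplices_subset_hverts: "s \<in> simplices D \<Longrightarrow> s \<subseteq> hverts D"
  unfolding simplices_def hverts_def by auto

lemma singleton_in_simplices: "s \<in> simplices D \<Longrightarrow> v \<in> s \<Longrightarrow> {v} \<in> simplices D"
  unfolding simplices_def by auto

lemma simplices_Int_eq_graph_inter_complex:
  assumes D: "is_disk D" "boundary_inducing D" "interior_verts D \<subseteq> U"
    and D': "is_disk D'" "boundary_inducing D'" "interior_verts D' \<subseteq> U'"
    and "U \<inter> U' = {}" "U \<inter> \<Union>(bd D') = {}" "U' \<inter> \<Union>(bd D) = {}"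
  shows "simplices D \<inter> simplices D' = graph_inter_complex (bd D) (bd D')"
proof
  have "hverts D \<subseteq> U \<union> \<Union>(bd D)" "hverts D' \<subseteq> U' \<union> \<Union>(bd D')"
    using D(3) D'(3) unfolding interior_verts_def by auto
  then have common: "hverts D \<inter> hverts D' \<subseteq> \<Union>(bd D) \<inter> \<Union>(bd D')"
    using assms(7-9) by blast
  show "simplices D \<inter> simplices D' \<subseteq> graph_inter_complex (bd D) (bd D')"
  proof
    fix s assume s: "s \<in> simplices D \<inter> simplices D'"
    then have "s \<subseteq> \<Union>(bd D) \<inter> \<Union>(bd D')"
      using simplices_subset_hverts[of s D] simplices_subset_hverts[of s D'] common by blast
    then have "card s = 1 \<or> s \<in> bd D" "card s = 1 \<or> s \<in> bd D'"
      using s boundary_inducing_simplex_on_bd[OF D(1,2), of s] boundary_inducing_simplex_on_bd[OF D'(1,2), of s]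
      by auto
    with \<open>s \<subseteq> \<Union>(bd D) \<inter> \<Union>(bd D')\<close> show "s \<in> graph_inter_complex (bd D) (bd D')"
      unfolding graph_inter_complex_def by (auto simp: card_1_singleton_iff)
  qed
  show "graph_inter_complex (bd D) (bd D') \<subseteq> simplices D \<inter> simplices D'"
  proof
    fix s assume "s \<in> graph_inter_complex (bd D) (bd D')"
    then consider (vertex) v where "s = {v}" "v \<in> \<Union>(bd D)" "v \<in> \<Union>(bd D')"
      | (edge) "s \<in> bd D" "s \<in> bd D'"
      unfolding graph_inter_complex_def by auto
    then show "s \<in> simplices D \<inter> simplices D'"
    proof cases
      case vertex
      then obtain t t' where "t \<in> bd D" "v \<in> t" "t' \<in> bd D'" "v \<in> t'"
        by blast
      then show ?thesis
        unfolding \<open>s = {v}\<close> using singleton_in_simplices bd_subset_simplices by (meson IntI subsetD)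
    next
      case edge
      then show ?thesis
        using bd_subset_simplices by (meson IntI subsetD)
    qed
  qed
qed

lemma disk_event_Diff_bd: "disk_event H C U \<longleftrightarrow> disk_event H C (U - \<Union>C)"
proof -
  have "interior_verts D \<subseteq> U \<longleftrightarrow> interior_verts D \<subseteq> U - \<Union>C" if "bd D = C" for D
    using that unfolding interior_verts_def by auto
  then show ?thesis
    unfolding disk_event_def by metis
qed

section \<open>Disjoint interiors\<close>

lemma finite_hverts: "three_uniform H \<Longrightarrow> finite (hverts H)"
  unfolding three_uniform_def hverts_def by (intro finite_Union) (auto intro: card_ge_0_finite)

lemma Union_subset_hverts: "C \<subseteq> skel H \<Longrightarrow> \<Union>C \<subseteq> hverts H"
  unfolding skel_def hverts_def by auto

lemma not_disk_event_prob_le: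
  assumes "finite (hverts H)" "\<Union>C \<subseteq> W" "W \<subseteq> hverts H" "0 \<le> p" "p \<le> 1"
    and "disk_coverable H p \<epsilon> C"
  shows "(1 - p) ^ card (W - \<Union>C) * rand_subset_prob p (hverts H - W) (\<lambda>U. \<not> disk_event H C U) \<le> \<epsilon>"
proof -
  have ev: "\<not> disk_event H C U \<longleftrightarrow> \<not> disk_event H C (U - \<Union>C)" for U
    by (subst disk_event_Diff_bd) (rule refl)
  have "hverts H - W = hverts H - ((W - \<Union>C) \<union> \<Union>C)"
    using assms(2) by (simp add: Un_absorb2)
  then have "(1 - p) ^ card (W - \<Union>C) * rand_subset_prob p (hverts H - W) (\<lambda>U. \<not> disk_event H C U)
      \<le> rand_subset_prob p (hverts H) (\<lambda>U. \<not> disk_event H C U)"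
    using assms(2,3)
    by (simp only:)
      (intro rand_subset_prob_Diff_le[where P = "\<lambda>U. \<not> disk_event H C U", OF assms(1) _ _ _ assms(4,5) ev];
       auto)
  also have "\<dots> \<le> \<epsilon>"
    using assms(6) rand_subset_prob_not[OF assms(1)] unfolding disk_coverable_def by simp
  finally show ?thesis .
qed

lemma one_minus_power_ge_ratio:
  fixes k m n :: nat and p :: real
  assumes "0 \<le> p" "p \<le> 1 / (real k + real m)" "n \<le> m"
  shows "real k / (real k + real m) \<le> (1 - p) ^ n"
proof (cases "k + m = 0")
  case False
  then have km: "1 \<le> real k + real m"
    by linarith
  then have pkm: "p * (real k + real m) \<le> 1"
    using assms(2) by (simp add: pos_le_divide_eq)
  moreover have "p \<le> p * (real k + real m)"
    using mult_left_mono[OF km assms(1)] by simp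
  ultimately have "p \<le> 1"
    by linarith
  have "real k / (real k + real m) = 1 - m / (real k + real m)"
    using km by (simp add: field_simps)
  also have "\<dots> \<le> 1 - m * p"
    using mult_left_mono[OF pkm, of "real m"] km by (simp add: field_simps)
  also have "\<dots> \<le> 1 - n * p"
    using assms(1,3) by (simp add: mult_right_mono)
  also have "\<dots> \<le> (1 - p) ^ n"
    using Bernoulli_inequality[of "- p" n] \<open>p \<le> 1\<close> by simp
  finally show ?thesis .
qed (use assms(3) in simp)

lemma exists_disjoint_disk_events:
  fixes p \<epsilon> :: real
  assumes "three_uniform H" "W \<subseteq> hverts H" "\<And>i. i < k \<Longrightarrow> \<Union>(C i) \<subseteq> W" "0 < p" "p < 1"
    and "p \<le> 1 / real (k + card W)" "\<epsilon> < 1 / real (k * (k + card W))"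
    and "\<And>i. i < k \<Longrightarrow> disk_coverable H p \<epsilon> (C i)"
  shows "\<exists>U. (\<forall>i<k. U i \<subseteq> hverts H - W \<and> disk_event H (C i) (U i))
    \<and> (\<forall>i<k. \<forall>j<k. i \<noteq> j \<longrightarrow> U i \<inter> U j = {})"
proof (rule exists_disjoint_sets_satisfying[where A = "\<lambda>i. disk_event H (C i)"])
  show "finite (hverts H - W)"
    using finite_hverts[OF assms(1)] by simp
  show "0 \<le> p"
    using assms(4) by simp
  have "real k * p \<le> p * (k + card W)"
    using assms(4) by (simp add: algebra_simps)
  also have "\<dots> \<le> 1"
    using assms(4,6) by (cases "k + card W = 0") (simp_all add: field_simps)
  finally show "real k * p \<le> 1" .
  fix i assume "i < k"
  let ?P = "rand_subset_prob p (hverts H - W) (\<lambda>U. \<not> disk_event H (C i) U)"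
  have P_nonneg: "0 \<le> ?P"
    using assms(4,5) by (intro rand_subset_prob_nonneg) auto
  have "real k / (real k + real (card W)) * ?P \<le> (1 - p) ^ card (W - \<Union>(C i)) * ?P"
    using finite_hverts[OF assms(1)] assms(2,4,6) P_nonneg finite_subset
    by (intro mult_right_mono one_minus_power_ge_ratio card_mono) auto
  also have "\<dots> \<le> \<epsilon>"
    using \<open>i < k\<close> assms(2-5,8)
    by (intro not_disk_event_prob_le finite_hverts[OF assms(1)]) auto
  finally have "real k * ?P \<le> \<epsilon> * (real k + real (card W))"
    using \<open>i < k\<close> by (simp add: pos_divide_le_eq)
  moreover have "\<epsilon> * (real k + real (card W)) * real k < 1"
  proof -
    have "0 < real (k * (k + card W))"
      using \<open>i < k\<close> by simp
    then have "\<epsilon> * real (k * (k + card W)) < 1"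
      using assms(7) by (simp only: pos_less_divide_eq)
    then show ?thesis
      by (simp add: algebra_simps)
  qed
  moreover have "1 \<le> real k"
    using \<open>i < k\<close> by simp
  ultimately show "?P < 1 / real k"
    by (smt (verit) div_self pos_divide_le_eq zero_less_divide_1_iff)
qed

theorem lemma3p1:
  fixes H :: "'a set set" and C :: "nat \<Rightarrow> 'a set set" and k :: nat
    and p \<epsilon> :: real
  assumes "three_uniform H"
    and "\<And>i. i < k \<Longrightarrow> is_cycle (C i) \<and> C i \<subseteq> skel H"
    and "0 < p" and "p < 1" and "0 < \<epsilon>" and "\<epsilon> < 1"
    and "p \<le> 1 / real (k + card (\<Union>i<k. \<Union>(C i)))"
    and "\<epsilon> < 1 / real (k * (k + card (\<Union>i<k. \<Union>(C i))))"
    and "\<And>i. i < k \<Longrightarrow> disk_coverable H p \<epsilon> (C i)"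
  shows "\<exists>D :: nat \<Rightarrow> 'a set set.
     (\<forall>i<k. D i \<subseteq> H \<and> is_disk (D i) \<and> bd (D i) = C i) \<and>
     (\<forall>i<k. \<forall>j<k. i \<noteq> j \<longrightarrow>
        simplices (D i) \<inter> simplices (D j) = graph_inter_complex (C i) (C j))"
proof -
  define W where "W = (\<Union>i<k. \<Union>(C i))"
  have C_W: "\<Union>(C i) \<subseteq> W" if "i < k" for i
    unfolding W_def using that by (intro UN_upper) simp
  have "W \<subseteq> hverts H"
    unfolding W_def using assms(2) by (intro UN_least Union_subset_hverts) blast
  then obtain U where U: "\<forall>i<k. U i \<subseteq> hverts H - W \<and> disk_event H (C i) (U i)"
    and U_disjoint: "\<forall>i<k. \<forall>j<k. i \<noteq> j \<longrightarrow> U i \<inter> U j = {}"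
    using exists_disjoint_disk_events[where C = C and k = k and W = W, OF assms(1) _ C_W assms(3,4)
        assms(7,8)[folded W_def] assms(9)]
    by blast
  then have "\<forall>i<k. \<exists>D. D \<subseteq> H \<and> is_disk D \<and> boundary_inducing D \<and> bd D = C i \<and> interior_verts D \<subseteq> U i"
    unfolding disk_event_def by blast
  then obtain D where D: "\<forall>i<k. D i \<subseteq> H \<and> is_disk (D i) \<and> boundary_inducing (D i) \<and> bd (D i) = C i
      \<and> interior_verts (D i) \<subseteq> U i"
    by metis
  have "simplices (D i) \<inter> simplices (D j) = graph_inter_complex (C i) (C j)"
    if "i < k" "j < k" "i \<noteq> j" for i j
  proof -
    have "U i \<inter> \<Union>(C j) = {}" "U j \<inter> \<Union>(C i) = {}"
      using U C_W that by blast+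
    then show ?thesis
      using simplices_Int_eq_graph_inter_complex[of "D i" "U i" "D j" "U j"] D U_disjoint that by metis
  qed
  with D show ?thesis
    by metis
qed

end
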